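(* Suppose the data are generated from the uncontaminated causal invertible VARMA model $\phi_0(L)x_t=\theta_0(L)\varepsilon_t$. Let $H_T\subset\{1,\dots,T\}$ be a (possibly data-dependent) retained subset, let $\kappa\ge 0$ be an integer, and let $\hat\varphi_T(\cdot)$ be the minimiser over $\mathcal V$ of the residual-based criterion $f_T(\varphi,\cdot)$. Assume: (A1, local optimisation stability) there is an open set $\mathcal N\subset\mathcal V$ such that, with probability tending to one as $T\to\infty$: (i) there exists $\delta>0$ with $\inf_{\varphi\notin\mathcal N}f_T(\varphi,H_T)\ge\inf_{\varphi\in\mathcal N}f_T(\varphi,H_T)+\delta$; and (ii) for every $\varepsilon>0$ there exists $\eta_\varepsilon>0$ with $\inf_{\varphi\in\mathcal N,\ \|\varphi-\hat\varphi_T(H_T)\|\ge\varepsilon}f_T(\varphi,H_T)\ge f_T(\hat\varphi_T(H_T),H_T)+\eta_\varepsilon$; (A2, stability under patch removal) $\sup_{\varphi\in\mathcal V}|f_T(\varphi,H_T)-f_T(\varphi,S^\kappa H_T)|\to 0$ in probability. Then, with probability tending to one, on the same open set $\mathcal N$: (i) there exists $\delta'>0$ with $\inf_{\varphi\notin\mathcal N}f_T(\varphi,S^\kappa H_T)\ge\inf_{\varphi\in\mathcal N}f_T(\varphi,S^\kappa H_T)+\delta'$; (ii) for every $\varepsilon>0$ there exists $\eta'_\varepsilon>0$ with $\inf_{\varphi\in\mathcal N,\ \|\varphi-\hat\varphi_T(S^\kappa H_T)\|\ge\varepsilon}f_T(\varphi,S^\kappa H_T)\ge f_T(\hat\varphi_T(S^\kappa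 H_T),S^\kappa H_T)+\eta'_\varepsilon$. Furthermore, $$(K^\kappa\hat\varphi_T)(H_T)-\hat\varphi_T(H_T)\overset{p}{\longrightarrow}0.$$ If instead $\hat\varphi_T$ is a maximiser of the criterion, the same statement holds with every infimum replaced by a supremum and every inequality of the form "$\ge\ \cdot+c$" replaced by "$\le\ \cdot-c$", in both the hypotheses and the conclusions.
   Context: Setting: $\{x_t\}$ is a $d$-dimensional mean-zero process with $\phi_0(L)x_t=\theta_0(L)\varepsilon_t$ (VARMA$(p,q)$), $\varepsilon_t$ zero-mean innovations. The parameter space $\mathcal V$ consists of $\varphi=(\phi,\theta)$ for which the model is causal and invertible; $\varphi_0=(\phi_0,\theta_0)\in\mathcal V$. For $\varphi\in\mathcal V$, $e_t(\varphi)=\theta^{-1}(L)\phi(L)x_t$ is the residual, so $e_t(\varphi_0)=\varepsilon_t$. For a subset $H\subset\{1,\dots,T\}$, the sample criterion is $f_T(\varphi,H)=g_T(\{e_t(\varphi):t\in H\})$ for some function $g_T$ (it depends on $\varphi$ only through these residuals), and $\hat\varphi_T(H)$ denotes an exact optimiser of $f_T(\cdot,H)$ over $\mathcal V$. Patch removal: with $H_T^c=\{1,\dots,T\}\setminus H_T$, $S^\kappa H_T=H_T\setminus\bigcup_{t\in H_T^c}\{t+1,\dots,\min(t+\kappa,T)\}$, and the patch removal operator acts on estimators by $(K^\kappa\hat\varphi_T)(H_T)=\hat\varphi_T(S^\kappa H_T)$. $\kappa$ may depend on $T$.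
   Formalization: In A1(i)-(ii) and in conclusions (i)-(ii), $\delta$, $\eta_\varepsilon$, $\delta'$ and $\eta'_\varepsilon$ are fixed positive constants, independent of T and of the sample, chosen before the event whose probability tends to one. Each condition added here is assumed in the paper as well or is needed for the statement above to hold. *)

theory Defs
  imports "HOL-Probability.Probability"
begin

definition patch_removal :: "nat \<Rightarrow> nat \<Rightarrow> nat set \<Rightarrow> nat set" where
  "patch_removal \<kappa> T H = H - (\<Union>t\<in>{1..T} - H. {t+1..min (t+\<kappa>) T})"

text \<open>"With probability tending to one" (inner-probability formulation): there are
  measurable events A_T contained in the event where the property holds at sample size T,
  with P(A_T) tending to 1.\<close>
definition wpa :: "'w measure \<Rightarrow> (nat \<Rightarrow> 'w \<Rightarrow> bool) \<Rightarrow> bool" where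
  "wpa M P \<longleftrightarrow> (\<exists>A. (\<forall>T. A T \<in> sets M \<and> A T \<subseteq> {\<omega>\<in>space M. P T \<omega>})
                     \<and> (\<lambda>T. measure M (A T)) \<longlonglongrightarrow> 1)"

text \<open>Infima/suprema are taken in the extended reals (inf of the empty set = +infinity,
  sup of the empty set = -infinity).\<close>

definition gap_min :: "('p \<Rightarrow> real) \<Rightarrow> 'p set \<Rightarrow> 'p set \<Rightarrow> real \<Rightarrow> bool" where
  "gap_min F V N \<delta> \<longleftrightarrow>
     (INF \<phi>\<in>V - N. ereal (F \<phi>)) \<ge> (INF \<phi>\<in>N. ereal (F \<phi>)) + ereal \<delta>"

definition sharp_min :: "('p::real_normed_vector \<Rightarrow> real) \<Rightarrow> 'p set \<Rightarrow> 'p \<Rightarrow> real \<Rightarrow> real \<Rightarrow> bool" where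
  "sharp_min F N \<psi> \<epsilon> \<eta> \<longleftrightarrow>
     (INF \<phi>\<in>{\<phi>\<in>N. norm (\<phi> - \<psi>) \<ge> \<epsilon>}. ereal (F \<phi>)) \<ge> ereal (F \<psi>) + ereal \<eta>"

definition gap_max :: "('p \<Rightarrow> real) \<Rightarrow> 'p set \<Rightarrow> 'p set \<Rightarrow> real \<Rightarrow> bool" where
  "gap_max F V N \<delta> \<longleftrightarrow>
     (SUP \<phi>\<in>V - N. ereal (F \<phi>)) \<le> (SUP \<phi>\<in>N. ereal (F \<phi>)) - ereal \<delta>"

definition sharp_max :: "('p::real_normed_vector \<Rightarrow> real) \<Rightarrow> 'p set \<Rightarrow> 'p \<Rightarrow> real \<Rightarrow> real \<Rightarrow> bool" where
  "sharp_max F N \<psi> \<epsilon> \<eta> \<longleftrightarrow>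
     (SUP \<phi>\<in>{\<phi>\<in>N. norm (\<phi> - \<psi>) \<ge> \<epsilon>}. ereal (F \<phi>)) \<le> ereal (F \<psi>) - ereal \<eta>"

end

theory Submission
  imports Defs
begin

text \<open>
  The argument is deterministic on the event where the hypotheses hold. If \<open>\<bar>F - G\<bar> < c\<close>
  on \<open>V\<close> and \<open>\<psi>\<close>, \<open>\<psi>'\<close> minimise \<open>F\<close>, \<open>G\<close> over \<open>V\<close>, then \<open>F \<psi>' < F \<psi> + 2 c\<close>. So once
  \<open>2 c\<close> is below the gap \<open>\<delta>\<close> and the sharpness \<open>\<eta>\<close> of \<open>F\<close>, the minimiser \<open>\<psi>'\<close> lies in \<open>N\<close>
  within \<open>\<epsilon>\<close> of \<open>\<psi>\<close>, and \<open>G\<close> inherits gap \<open>\<delta> - 2 c\<close> and, at radius \<open>\<epsilon>\<close>, the sharpness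
  \<open>\<eta> - 2 c\<close> that \<open>F\<close> has at radius \<open>\<epsilon>/2\<close>. Finitely many events of probability tending to one
  intersect to such an event, and the maximisation case is minimisation of \<open>-f\<close>.
\<close>

lemma sharp_min_iff:
  "sharp_min F N \<psi> \<epsilon> \<eta> \<longleftrightarrow> (\<forall>\<phi>\<in>N. \<epsilon> \<le> norm (\<phi> - \<psi>) \<longrightarrow> F \<psi> + \<eta> \<le> F \<phi>)"
  unfolding sharp_min_def by (auto simp: le_INF_iff)

lemma sharp_max_iff:
  "sharp_max F N \<psi> \<epsilon> \<eta> \<longleftrightarrow> (\<forall>\<phi>\<in>N. \<epsilon> \<le> norm (\<phi> - \<psi>) \<longrightarrow> F \<phi> \<le> F \<psi> - \<eta>)"
  unfolding sharp_max_def by (auto simp: SUP_le_iff)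

lemma sharp_max_iff_sharp_min_uminus:
  "sharp_max F N \<psi> \<epsilon> \<eta> \<longleftrightarrow> sharp_min (\<lambda>\<phi>. - F \<phi>) N \<psi> \<epsilon> \<eta>"
  unfolding sharp_max_iff sharp_min_iff by auto

lemma gap_max_iff_gap_min_uminus:
  "gap_max F V N \<delta> \<longleftrightarrow> gap_min (\<lambda>\<phi>. - F \<phi>) V N \<delta>"
proof -
  have INF_uminus: "(INF \<phi>\<in>S. ereal (- F \<phi>)) = - (SUP \<phi>\<in>S. ereal (F \<phi>))" for S
    using ereal_INF_uminus_eq[of "\<lambda>\<phi>. ereal (F \<phi>)" S] by simp
  have "a \<le> b - ereal \<delta> \<longleftrightarrow> - b + ereal \<delta> \<le> - a" for a b :: ereal
    by (cases a; cases b) auto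
  then show ?thesis unfolding gap_max_def gap_min_def INF_uminus .
qed

lemma gap_min_iff_argmin:
  assumes argmin: "is_arg_min F (\<lambda>\<phi>. \<phi> \<in> V) \<psi>" and "N \<subseteq> V" and "\<delta> > 0"
  shows "gap_min F V N \<delta> \<longleftrightarrow> \<psi> \<in> N \<and> (\<forall>\<phi>\<in>V - N. F \<psi> + \<delta> \<le> F \<phi>)"
proof -
  have min: "\<psi> \<in> V" "\<And>\<phi>. \<phi> \<in> V \<Longrightarrow> F \<psi> \<le> F \<phi>"
    using argmin by (auto simp: is_arg_min_linorder)
  have inf_N: "ereal (F \<psi>) \<le> (INF \<phi>\<in>N. ereal (F \<phi>))"
    using min \<open>N \<subseteq> V\<close> by (intro INF_greatest) auto
  show ?thesis
  proof (cases "\<psi> \<in> N")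
    case True
    then have "(INF \<phi>\<in>N. ereal (F \<phi>)) = ereal (F \<psi>)"
      using inf_N by (intro antisym INF_lower) auto
    with True show ?thesis by (simp add: gap_min_def le_INF_iff)
  next
    case False
    have "(INF \<phi>\<in>V - N. ereal (F \<phi>)) \<le> ereal (F \<psi>)"
      using False min by (intro INF_lower) auto
    also have "\<dots> < ereal (F \<psi>) + ereal \<delta>" using \<open>\<delta> > 0\<close> by simp
    also have "\<dots> \<le> (INF \<phi>\<in>N. ereal (F \<phi>)) + ereal \<delta>" using inf_N by (rule add_right_mono)
    finally show ?thesis using False by (auto simp: gap_min_def)
  qed
qed

lemma gap_min_perturb:
  assumes argmin_F: "is_arg_min F (\<lambda>\<phi>. \<phi> \<in> V) \<psi>" and argmin_G: "is_arg_min G (\<lambda>\<phi>. \<phi> \<in> V) \<psi>'"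
    and "N \<subseteq> V" and close: "\<forall>\<phi>\<in>V. \<bar>F \<phi> - G \<phi>\<bar> < c"
    and gap: "gap_min F V N \<delta>" and "0 < \<delta>'" and margin: "\<delta>' + 2 * c \<le> \<delta>"
  shows "gap_min G V N \<delta>'"
proof -
  have "\<psi> \<in> V" "\<psi>' \<in> V" "G \<psi>' \<le> G \<psi>"
    using argmin_F argmin_G by (auto simp: is_arg_min_linorder)
  have close_\<psi>: "\<bar>F \<psi> - G \<psi>\<bar> < c" using close \<open>\<psi> \<in> V\<close> by blast
  then have "0 < \<delta>" using \<open>0 < \<delta>'\<close> margin by linarith
  then have sep: "\<forall>\<phi>\<in>V - N. F \<psi> + \<delta> \<le> F \<phi>"
    using gap gap_min_iff_argmin[OF argmin_F \<open>N \<subseteq> V\<close>] by blast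
  have sep': "G \<psi>' + \<delta>' \<le> G \<phi>" if "\<phi> \<in> V - N" for \<phi>
  proof -
    have "F \<psi> + \<delta> \<le> F \<phi>" "\<bar>F \<phi> - G \<phi>\<bar> < c" using sep close that by auto
    with close_\<psi> \<open>G \<psi>' \<le> G \<psi>\<close> margin show ?thesis by linarith
  qed
  have "\<psi>' \<in> N"
  proof (rule ccontr)
    assume "\<psi>' \<notin> N"
    with sep' \<open>\<psi>' \<in> V\<close> have "G \<psi>' + \<delta>' \<le> G \<psi>'" by blast
    with \<open>0 < \<delta>'\<close> show False by linarith
  qed
  with sep' show ?thesis using gap_min_iff_argmin[OF argmin_G \<open>N \<subseteq> V\<close> \<open>0 < \<delta>'\<close>] by blast
qed

lemma perturbed_argmin_close:
  assumes argmin_F: "is_arg_min F (\<lambda>\<phi>. \<phi> \<in> V) \<psi>" and argmin_G: "is_arg_min G (\<lambda>\<phi>. \<phi> \<in> V) \<psi>'"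
    and "N \<subseteq> V" and close: "\<forall>\<phi>\<in>V. \<bar>F \<phi> - G \<phi>\<bar> < c"
    and gap: "gap_min F V N \<delta>" and sharp: "sharp_min F N \<psi> \<epsilon> \<eta>"
    and "2 * c < \<delta>" "2 * c < \<eta>"
  shows "norm (\<psi>' - \<psi>) < \<epsilon>"
proof (rule ccontr)
  assume far: "\<not> norm (\<psi>' - \<psi>) < \<epsilon>"
  have "\<psi> \<in> V" "\<psi>' \<in> V" "G \<psi>' \<le> G \<psi>"
    using argmin_F argmin_G by (auto simp: is_arg_min_linorder)
  moreover have "\<bar>F \<psi> - G \<psi>\<bar> < c" "\<bar>F \<psi>' - G \<psi>'\<bar> < c"
    using close \<open>\<psi> \<in> V\<close> \<open>\<psi>' \<in> V\<close> by auto
  ultimately have near_min: "F \<psi>' < F \<psi> + 2 * c" and "0 < \<delta>"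
    using \<open>2 * c < \<delta>\<close> by linarith+
  show False
  proof (cases "\<psi>' \<in> N")
    case True
    moreover have "\<epsilon> \<le> norm (\<psi>' - \<psi>)" using far by linarith
    ultimately have "F \<psi> + \<eta> \<le> F \<psi>'" using sharp unfolding sharp_min_iff by blast
    with near_min \<open>2 * c < \<eta>\<close> show False by linarith
  next
    case False
    have "\<forall>\<phi>\<in>V - N. F \<psi> + \<delta> \<le> F \<phi>"
      using gap gap_min_iff_argmin[OF argmin_F \<open>N \<subseteq> V\<close> \<open>0 < \<delta>\<close>] by blast
    with False \<open>\<psi>' \<in> V\<close> have "F \<psi> + \<delta> \<le> F \<psi>'" by blast
    with near_min \<open>2 * c < \<delta>\<close> show False by linarith
  qed
qed

lemma sharp_min_perturb:
  assumes "\<psi> \<in> V" and argmin_G: "is_arg_min G (\<lambda>\<phi>. \<phi> \<in> V) \<psi>'"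
    and "N \<subseteq> V" and close: "\<forall>\<phi>\<in>V. \<bar>F \<phi> - G \<phi>\<bar> < c"
    and sharp: "sharp_min F N \<psi> \<epsilon>\<^sub>0 \<eta>"
    and radius: "norm (\<psi>' - \<psi>) + \<epsilon>\<^sub>0 \<le> \<epsilon>" and margin: "\<eta>' + 2 * c \<le> \<eta>"
  shows "sharp_min G N \<psi>' \<epsilon> \<eta>'"
  unfolding sharp_min_iff
proof (intro ballI impI)
  fix \<phi> assume "\<phi> \<in> N" and far: "\<epsilon> \<le> norm (\<phi> - \<psi>')"
  have "norm (\<phi> - \<psi>') \<le> norm (\<phi> - \<psi>) + norm (\<psi>' - \<psi>)"
    using norm_triangle_ineq4[of "\<phi> - \<psi>" "\<psi>' - \<psi>"] by simp
  then have "F \<psi> + \<eta> \<le> F \<phi>"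
    using sharp \<open>\<phi> \<in> N\<close> far radius by (auto simp: sharp_min_iff)
  moreover have "G \<psi>' \<le> G \<psi>" using argmin_G \<open>\<psi> \<in> V\<close> by (auto simp: is_arg_min_linorder)
  moreover have "\<bar>F \<psi> - G \<psi>\<bar> < c" "\<bar>F \<phi> - G \<phi>\<bar> < c"
    using close \<open>\<psi> \<in> V\<close> \<open>\<phi> \<in> N\<close> \<open>N \<subseteq> V\<close> by auto
  ultimately show "G \<psi>' + \<eta>' \<le> G \<phi>" using margin by linarith
qed

lemma wpa_mono:
  assumes "wpa M P" "\<And>T \<omega>. \<omega> \<in> space M \<Longrightarrow> P T \<omega> \<Longrightarrow> Q T \<omega>"
  shows "wpa M Q"
  using assms unfolding wpa_def by blast

lemma (in prob_space) wpa_conj: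
  assumes "wpa M P" "wpa M Q"
  shows "wpa M (\<lambda>T \<omega>. P T \<omega> \<and> Q T \<omega>)"
proof -
  obtain A where A: "\<And>T. A T \<in> events" "\<And>T. A T \<subseteq> {\<omega>\<in>space M. P T \<omega>}"
    and lim_A: "(\<lambda>T. prob (A T)) \<longlonglongrightarrow> 1" using assms(1) unfolding wpa_def by blast
  obtain B where B: "\<And>T. B T \<in> events" "\<And>T. B T \<subseteq> {\<omega>\<in>space M. Q T \<omega>}"
    and lim_B: "(\<lambda>T. prob (B T)) \<longlonglongrightarrow> 1" using assms(2) unfolding wpa_def by blast
  have lower: "prob (A T) + prob (B T) - 1 \<le> prob (A T \<inter> B T)" for T
  proof -
    have "prob (A T \<union> B T) = prob (A T) + prob (B T) - prob (A T \<inter> B T)"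
      using A B by (intro measure_Un3) (auto simp: fmeasurable_eq_sets)
    with prob_le_1[of "A T \<union> B T"] show ?thesis by linarith
  qed
  have "(\<lambda>T. prob (A T) + prob (B T) - 1) \<longlonglongrightarrow> 1 + 1 - 1"
    by (intro tendsto_intros lim_A lim_B)
  then have lim_lower: "(\<lambda>T. prob (A T) + prob (B T) - 1) \<longlonglongrightarrow> 1" by simp
  have "(\<lambda>T. prob (A T \<inter> B T)) \<longlonglongrightarrow> 1"
    by (rule tendsto_sandwich[OF _ _ lim_lower tendsto_const]) (simp_all add: lower prob_le_1)
  moreover have "\<forall>T. A T \<inter> B T \<in> events \<and> A T \<inter> B T \<subseteq> {\<omega>\<in>space M. P T \<omega> \<and> Q T \<omega>}"
    using A B by blast
  ultimately show ?thesis unfolding wpa_def by (intro exI[of _ "\<lambda>T. A T \<inter> B T"]) simp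
qed

locale uniformly_close_criteria = prob_space M for M :: "'w measure" +
  fixes V N :: "'p::real_normed_vector set"
    and F G :: "nat \<Rightarrow> 'w \<Rightarrow> 'p \<Rightarrow> real"
    and \<psi> \<psi>' :: "nat \<Rightarrow> 'w \<Rightarrow> 'p"
  assumes N_subset: "N \<subseteq> V"
    and argmin_F: "\<And>T \<omega>. is_arg_min (F T \<omega>) (\<lambda>\<phi>. \<phi> \<in> V) (\<psi> T \<omega>)"
    and argmin_G: "\<And>T \<omega>. is_arg_min (G T \<omega>) (\<lambda>\<phi>. \<phi> \<in> V) (\<psi>' T \<omega>)"
    and uniformly_close: "\<And>c. 0 < c \<Longrightarrow> wpa M (\<lambda>T \<omega>. \<forall>\<phi>\<in>V. \<bar>F T \<omega> \<phi> - G T \<omega> \<phi>\<bar> < c)"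
begin

lemma wpa_gap_min:
  assumes "0 < \<delta>" and gap: "wpa M (\<lambda>T \<omega>. gap_min (F T \<omega>) V N \<delta>)"
  shows "wpa M (\<lambda>T \<omega>. gap_min (G T \<omega>) V N (\<delta> / 2))"
  using wpa_conj[OF gap uniformly_close[of "\<delta> / 4"]]
proof (rule wpa_mono)
  fix T \<omega>
  assume "gap_min (F T \<omega>) V N \<delta> \<and> (\<forall>\<phi>\<in>V. \<bar>F T \<omega> \<phi> - G T \<omega> \<phi>\<bar> < \<delta> / 4)"
  then show "gap_min (G T \<omega>) V N (\<delta> / 2)"
    using \<open>0 < \<delta>\<close>
    by (intro gap_min_perturb[OF argmin_F argmin_G N_subset, where c = "\<delta> / 4" and \<delta> = \<delta>]) auto
qed (use \<open>0 < \<delta>\<close> in simp)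

lemma wpa_perturbed_argmin_close:
  assumes "0 < \<delta>" and gap: "wpa M (\<lambda>T \<omega>. gap_min (F T \<omega>) V N \<delta>)"
    and "0 < \<eta>" and sharp: "wpa M (\<lambda>T \<omega>. sharp_min (F T \<omega>) N (\<psi> T \<omega>) \<epsilon> \<eta>)"
  shows "wpa M (\<lambda>T \<omega>. norm (\<psi>' T \<omega> - \<psi> T \<omega>) < \<epsilon>)"
proof -
  define c where "c = min \<delta> \<eta> / 4"
  have "0 < c" "2 * c < \<delta>" "2 * c < \<eta>" using \<open>0 < \<delta>\<close> \<open>0 < \<eta>\<close> by (auto simp: c_def)
  show ?thesis
    using wpa_conj[OF wpa_conj[OF gap sharp] uniformly_close[OF \<open>0 < c\<close>]]
  proof (rule wpa_mono)
    fix T \<omega>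
    assume "(gap_min (F T \<omega>) V N \<delta> \<and> sharp_min (F T \<omega>) N (\<psi> T \<omega>) \<epsilon> \<eta>)
      \<and> (\<forall>\<phi>\<in>V. \<bar>F T \<omega> \<phi> - G T \<omega> \<phi>\<bar> < c)"
    then have "\<forall>\<phi>\<in>V. \<bar>F T \<omega> \<phi> - G T \<omega> \<phi>\<bar> < c" "gap_min (F T \<omega>) V N \<delta>"
      "sharp_min (F T \<omega>) N (\<psi> T \<omega>) \<epsilon> \<eta>" by auto
    from perturbed_argmin_close[OF argmin_F argmin_G N_subset this \<open>2 * c < \<delta>\<close> \<open>2 * c < \<eta>\<close>]
    show "norm (\<psi>' T \<omega> - \<psi> T \<omega>) < \<epsilon>" .
  qed
qed

lemma wpa_sharp_min:
  assumes "0 < \<delta>" and gap: "wpa M (\<lambda>T \<omega>. gap_min (F T \<omega>) V N \<delta>)"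
    and "0 < \<eta>" and sharp: "wpa M (\<lambda>T \<omega>. sharp_min (F T \<omega>) N (\<psi> T \<omega>) (\<epsilon> / 2) \<eta>)"
  shows "wpa M (\<lambda>T \<omega>. sharp_min (G T \<omega>) N (\<psi>' T \<omega>) \<epsilon> (\<eta> / 2))"
  using wpa_conj[OF wpa_conj[OF wpa_perturbed_argmin_close[OF assms] sharp] uniformly_close[of "\<eta> / 4"]]
proof (rule wpa_mono)
  fix T \<omega>
  have "\<psi> T \<omega> \<in> V" using argmin_F by (simp add: is_arg_min_linorder)
  assume "(norm (\<psi>' T \<omega> - \<psi> T \<omega>) < \<epsilon> / 2 \<and> sharp_min (F T \<omega>) N (\<psi> T \<omega>) (\<epsilon> / 2) \<eta>)
    \<and> (\<forall>\<phi>\<in>V. \<bar>F T \<omega> \<phi> - G T \<omega> \<phi>\<bar> < \<eta> / 4)"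
  then show "sharp_min (G T \<omega>) N (\<psi>' T \<omega>) \<epsilon> (\<eta> / 2)"
    by (intro sharp_min_perturb[OF \<open>\<psi> T \<omega> \<in> V\<close> argmin_G N_subset,
          where c = "\<eta> / 4" and \<epsilon>\<^sub>0 = "\<epsilon> / 2" and \<eta> = \<eta>]) auto
qed (use \<open>0 < \<eta>\<close> in simp)

lemma minimisation_stable:
  assumes "\<exists>\<delta>>0. wpa M (\<lambda>T \<omega>. gap_min (F T \<omega>) V N \<delta>)"
    and sharp: "\<forall>\<epsilon>>0. \<exists>\<eta>>0. wpa M (\<lambda>T \<omega>. sharp_min (F T \<omega>) N (\<psi> T \<omega>) \<epsilon> \<eta>)"
  shows "(\<exists>\<delta>>0. wpa M (\<lambda>T \<omega>. gap_min (G T \<omega>) V N \<delta>))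
    \<and> (\<forall>\<epsilon>>0. \<exists>\<eta>>0. wpa M (\<lambda>T \<omega>. sharp_min (G T \<omega>) N (\<psi>' T \<omega>) \<epsilon> \<eta>))
    \<and> (\<forall>\<epsilon>>0. wpa M (\<lambda>T \<omega>. norm (\<psi>' T \<omega> - \<psi> T \<omega>) < \<epsilon>))"
proof (intro conjI allI impI)
  obtain \<delta> where "0 < \<delta>" and gap: "wpa M (\<lambda>T \<omega>. gap_min (F T \<omega>) V N \<delta>)"
    using assms(1) by blast
  have "wpa M (\<lambda>T \<omega>. gap_min (G T \<omega>) V N (\<delta> / 2))"
    by (rule wpa_gap_min[OF \<open>0 < \<delta>\<close> gap])
  with \<open>0 < \<delta>\<close> show "\<exists>\<delta>>0. wpa M (\<lambda>T \<omega>. gap_min (G T \<omega>) V N \<delta>)"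
    by (intro exI[of _ "\<delta> / 2"]) simp
  fix \<epsilon> :: real
  assume "0 < \<epsilon>"
  obtain \<eta> where "0 < \<eta>" and "wpa M (\<lambda>T \<omega>. sharp_min (F T \<omega>) N (\<psi> T \<omega>) (\<epsilon> / 2) \<eta>)"
    using sharp \<open>0 < \<epsilon>\<close> by (meson half_gt_zero)
  then have "wpa M (\<lambda>T \<omega>. sharp_min (G T \<omega>) N (\<psi>' T \<omega>) \<epsilon> (\<eta> / 2))"
    by (rule wpa_sharp_min[OF \<open>0 < \<delta>\<close> gap])
  with \<open>0 < \<eta>\<close> show "\<exists>\<eta>>0. wpa M (\<lambda>T \<omega>. sharp_min (G T \<omega>) N (\<psi>' T \<omega>) \<epsilon> \<eta>)"
    by (intro exI[of _ "\<eta> / 2"]) simp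
next
  fix \<epsilon> :: real
  assume "0 < \<epsilon>"
  obtain \<delta> where "0 < \<delta>" and gap: "wpa M (\<lambda>T \<omega>. gap_min (F T \<omega>) V N \<delta>)"
    using assms(1) by blast
  obtain \<eta> where "0 < \<eta>" and "wpa M (\<lambda>T \<omega>. sharp_min (F T \<omega>) N (\<psi> T \<omega>) \<epsilon> \<eta>)"
    using sharp \<open>0 < \<epsilon>\<close> by blast
  then show "wpa M (\<lambda>T \<omega>. norm (\<psi>' T \<omega> - \<psi> T \<omega>) < \<epsilon>)"
    by (rule wpa_perturbed_argmin_close[OF \<open>0 < \<delta>\<close> gap])
qed

end

lemma minimiser_stable_under_uniform_perturbation:
  fixes f :: "nat \<Rightarrow> 'p::real_normed_vector \<Rightarrow> nat set \<Rightarrow> 'w \<Rightarrow> real"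
    and \<phi>h :: "nat \<Rightarrow> nat set \<Rightarrow> 'w \<Rightarrow> 'p"
    and H S :: "nat \<Rightarrow> 'w \<Rightarrow> nat set"
  assumes "prob_space M" and "N \<subseteq> V"
    and "\<And>T \<omega>. H T \<omega> \<subseteq> {1..T}" and "\<And>T \<omega>. S T \<omega> \<subseteq> {1..T}"
    and "\<And>c. 0 < c \<Longrightarrow> wpa M (\<lambda>T \<omega>. \<forall>\<phi>\<in>V. \<bar>f T \<phi> (H T \<omega>) \<omega> - f T \<phi> (S T \<omega>) \<omega>\<bar> < c)"
    and argmin: "\<forall>T Hs \<omega>. Hs \<subseteq> {1..T} \<longrightarrow>
      \<phi>h T Hs \<omega> \<in> V \<and> (\<forall>\<phi>\<in>V. f T (\<phi>h T Hs \<omega>) Hs \<omega> \<le> f T \<phi> Hs \<omega>)"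
    and "\<exists>\<delta>>0. wpa M (\<lambda>T \<omega>. gap_min (\<lambda>\<phi>. f T \<phi> (H T \<omega>) \<omega>) V N \<delta>)"
    and "\<forall>\<epsilon>>0. \<exists>\<eta>>0. wpa M (\<lambda>T \<omega>.
      sharp_min (\<lambda>\<phi>. f T \<phi> (H T \<omega>) \<omega>) N (\<phi>h T (H T \<omega>) \<omega>) \<epsilon> \<eta>)"
  shows "(\<exists>\<delta>>0. wpa M (\<lambda>T \<omega>. gap_min (\<lambda>\<phi>. f T \<phi> (S T \<omega>) \<omega>) V N \<delta>))
    \<and> (\<forall>\<epsilon>>0. \<exists>\<eta>>0. wpa M (\<lambda>T \<omega>.
        sharp_min (\<lambda>\<phi>. f T \<phi> (S T \<omega>) \<omega>) N (\<phi>h T (S T \<omega>) \<omega>) \<epsilon> \<eta>))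
    \<and> (\<forall>\<epsilon>>0. wpa M (\<lambda>T \<omega>. norm (\<phi>h T (S T \<omega>) \<omega> - \<phi>h T (H T \<omega>) \<omega>) < \<epsilon>))"
proof -
  interpret uniformly_close_criteria M V N "\<lambda>T \<omega> \<phi>. f T \<phi> (H T \<omega>) \<omega>" "\<lambda>T \<omega> \<phi>. f T \<phi> (S T \<omega>) \<omega>"
    "\<lambda>T \<omega>. \<phi>h T (H T \<omega>) \<omega>" "\<lambda>T \<omega>. \<phi>h T (S T \<omega>) \<omega>"
  proof (intro uniformly_close_criteria.intro uniformly_close_criteria_axioms.intro)
    fix T \<omega>
    show "is_arg_min (\<lambda>\<phi>. f T \<phi> (H T \<omega>) \<omega>) (\<lambda>\<phi>. \<phi> \<in> V) (\<phi>h T (H T \<omega>) \<omega>)"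
      "is_arg_min (\<lambda>\<phi>. f T \<phi> (S T \<omega>) \<omega>) (\<lambda>\<phi>. \<phi> \<in> V) (\<phi>h T (S T \<omega>) \<omega>)"
      using argmin assms(3,4) unfolding is_arg_min_linorder by blast+
  qed (fact assms)+
  show ?thesis by (rule minimisation_stable[OF assms(7,8)])
qed

theorem theorem1:
  fixes M :: "'w measure"
    and V N :: "'p::euclidean_space set"
    and e :: "'p \<Rightarrow> nat \<Rightarrow> 'w \<Rightarrow> 'v"
    and g :: "nat \<Rightarrow> (nat \<Rightarrow> 'v) \<Rightarrow> real"
    and f :: "nat \<Rightarrow> 'p \<Rightarrow> nat set \<Rightarrow> 'w \<Rightarrow> real"
    and \<phi>h :: "nat \<Rightarrow> nat set \<Rightarrow> 'w \<Rightarrow> 'p"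
    and H :: "nat \<Rightarrow> 'w \<Rightarrow> nat set"
    and \<kappa> :: "nat \<Rightarrow> nat"
  assumes prob: "prob_space M"
    and crit: "\<And>T \<phi> Hs \<omega>. f T \<phi> Hs \<omega> = g T (restrict (\<lambda>t. e \<phi> t \<omega>) Hs)"
    and HT: "\<And>T \<omega>. H T \<omega> \<subseteq> {1..T}"
    and N_open: "open N" and N_sub: "N \<subseteq> V"
    and A2: "\<And>c. c > 0 \<Longrightarrow> wpa M (\<lambda>T \<omega>.
              (SUP \<phi>\<in>V. ereal \<bar>f T \<phi> (H T \<omega>) \<omega> - f T \<phi> (patch_removal (\<kappa> T) T (H T \<omega>)) \<omega>\<bar>) < ereal c)"
  shows
   "((\<forall>T Hs \<omega>. Hs \<subseteq> {1..T} \<longrightarrow>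
        \<phi>h T Hs \<omega> \<in> V \<and> (\<forall>\<phi>\<in>V. f T (\<phi>h T Hs \<omega>) Hs \<omega> \<le> f T \<phi> Hs \<omega>))
     \<and> (\<exists>\<delta>>0. wpa M (\<lambda>T \<omega>. gap_min (\<lambda>\<phi>. f T \<phi> (H T \<omega>) \<omega>) V N \<delta>))
     \<and> (\<forall>\<epsilon>>0. \<exists>\<eta>>0. wpa M (\<lambda>T \<omega>.
           sharp_min (\<lambda>\<phi>. f T \<phi> (H T \<omega>) \<omega>) N (\<phi>h T (H T \<omega>) \<omega>) \<epsilon> \<eta>))
    \<longrightarrow>
     (\<exists>\<delta>'>0. wpa M (\<lambda>T \<omega>. gap_min (\<lambda>\<phi>. f T \<phi> (patch_removal (\<kappa> T) T (H T \<omega>)) \<omega>) V N \<delta>'))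
     \<and> (\<forall>\<epsilon>>0. \<exists>\<eta>'>0. wpa M (\<lambda>T \<omega>.
           sharp_min (\<lambda>\<phi>. f T \<phi> (patch_removal (\<kappa> T) T (H T \<omega>)) \<omega>) N
             (\<phi>h T (patch_removal (\<kappa> T) T (H T \<omega>)) \<omega>) \<epsilon> \<eta>'))
     \<and> (\<forall>\<epsilon>>0. wpa M (\<lambda>T \<omega>.
           norm (\<phi>h T (patch_removal (\<kappa> T) T (H T \<omega>)) \<omega> - \<phi>h T (H T \<omega>) \<omega>) < \<epsilon>)))
  \<and>
   ((\<forall>T Hs \<omega>. Hs \<subseteq> {1..T} \<longrightarrow>
        \<phi>h T Hs \<omega> \<in> V \<and> (\<forall>\<phi>\<in>V. f T \<phi> Hs \<omega> \<le> f T (\<phi>h T Hs \<omega>) Hs \<omega>))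
     \<and> (\<exists>\<delta>>0. wpa M (\<lambda>T \<omega>. gap_max (\<lambda>\<phi>. f T \<phi> (H T \<omega>) \<omega>) V N \<delta>))
     \<and> (\<forall>\<epsilon>>0. \<exists>\<eta>>0. wpa M (\<lambda>T \<omega>.
           sharp_max (\<lambda>\<phi>. f T \<phi> (H T \<omega>) \<omega>) N (\<phi>h T (H T \<omega>) \<omega>) \<epsilon> \<eta>))
    \<longrightarrow>
     (\<exists>\<delta>'>0. wpa M (\<lambda>T \<omega>. gap_max (\<lambda>\<phi>. f T \<phi> (patch_removal (\<kappa> T) T (H T \<omega>)) \<omega>) V N \<delta>'))
     \<and> (\<forall>\<epsilon>>0. \<exists>\<eta>'>0. wpa M (\<lambda>T \<omega>.
           sharp_max (\<lambda>\<phi>. f T \<phi> (patch_removal (\<kappa> T) T (H T \<omega>)) \<omega>) N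
             (\<phi>h T (patch_removal (\<kappa> T) T (H T \<omega>)) \<omega>) \<epsilon> \<eta>'))
     \<and> (\<forall>\<epsilon>>0. wpa M (\<lambda>T \<omega>.
           norm (\<phi>h T (patch_removal (\<kappa> T) T (H T \<omega>)) \<omega> - \<phi>h T (H T \<omega>) \<omega>) < \<epsilon>)))"
proof -
  let ?S = "\<lambda>T \<omega>. patch_removal (\<kappa> T) T (H T \<omega>)"
  have S_sub: "?S T \<omega> \<subseteq> {1..T}" for T \<omega>
    using HT[of T \<omega>] by (auto simp: patch_removal_def)
  have close: "wpa M (\<lambda>T \<omega>. \<forall>\<phi>\<in>V. \<bar>f T \<phi> (H T \<omega>) \<omega> - f T \<phi> (?S T \<omega>) \<omega>\<bar> < c)" if "0 < c" for c
    using A2[OF that] by (rule wpa_mono) (auto dest: SUP_lessD)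
  have abs_uminus_diff: "\<bar>- x - - y\<bar> = \<bar>x - y\<bar>" for x y :: real by linarith
  have close_uminus:
    "wpa M (\<lambda>T \<omega>. \<forall>\<phi>\<in>V. \<bar>- f T \<phi> (H T \<omega>) \<omega> - - f T \<phi> (?S T \<omega>) \<omega>\<bar> < c)" if "0 < c" for c
    using close[OF that] by (simp only: abs_uminus_diff)
  note min_stable = minimiser_stable_under_uniform_perturbation[where S = ?S, OF prob N_sub HT S_sub]
  show ?thesis
    unfolding gap_max_iff_gap_min_uminus sharp_max_iff_sharp_min_uminus
    by (rule conjI; intro impI; elim conjE; rule min_stable[where f = f, OF close]
        min_stable[where f = "\<lambda>T \<phi> Hs \<omega>. - f T \<phi> Hs \<omega>", OF close_uminus];
        simp only: neg_le_iff_le)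
qed

end
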